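(* For every integer $m\ge0$ and all $x,u\in O$: (1) $D_{q^m-1}(x+u)=\sum_{e+f=q^m-1}(-1)^eD_e(x)D_f(u)$; (2) $D_{q^m-1}(x-u)=\sum_{e+f=q^m-1}D_e(x)D_f(u)$; (3) $D'_{q^m-1}(x+u)=\sum_{e+f=q^m-1}(-1)^eD_e(x)D'_f(u)$; (4) $D'_{q^m-1}(x-u)=\sum_{e+f=q^m-1}D_e(x)D'_f(u)$, where the sums run over pairs of nonnegative integers $(e,f)$.
   Context: Let $q$ be a prime power, $O=\mathbf{F}_q[[T]]$. Hasse derivatives: $\mathcal{D}_n(\sum_ia_iT^i)=\sum_i\binom{i}{n}a_iT^{i-n}$ (binomials in $\mathbf{F}_q$). For $j\ge0$ with base-$q$ expansion $j=\alpha_0+\alpha_1q+\cdots+\alpha_sq^s$ ($0\le\alpha_i<q$): $D_j(x)=\prod_{n=0}^s\mathcal{D}_n(x)^{\alpha_n}$ ($D_0=1$), and $D'_j(x)=\prod_{n=0}^sD'_{\alpha_nq^n}(x)$ where $D'_{\alpha q^n}(x)=\mathcal{D}_n(x)^\alpha$ if $0\le\alpha<q-1$ and $D'_{(q-1)q^n}(x)=\mathcal{D}_n(x)^{q-1}-1$. *)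

theory Defs
  imports "HOL-Computational_Algebra.Formal_Power_Series" "HOL-Library.Cardinality"
begin

text \<open>O = F_q[[T]] is modelled as 'a fps for a finite field 'a, q = CARD('a).\<close>

definition hasse :: "nat \<Rightarrow> 'a::comm_ring_1 fps \<Rightarrow> 'a fps" where
  "hasse n f = Abs_fps (\<lambda>i. of_nat ((i + n) choose n) * fps_nth f (i + n))"

definition digit :: "nat \<Rightarrow> nat \<Rightarrow> nat \<Rightarrow> nat" where
  "digit q n j = j div q ^ n mod q"

text \<open>D_j(x) = prod_n (Hasse_n x)^(alpha_n); all digits with n > j vanish (q >= 2).\<close>
definition Dfun :: "nat \<Rightarrow> nat \<Rightarrow> 'a::comm_ring_1 fps \<Rightarrow> 'a fps" where
  "Dfun q j x = (\<Prod>n\<le>j. hasse n x ^ digit q n j)"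

definition Dpfun :: "nat \<Rightarrow> nat \<Rightarrow> 'a::comm_ring_1 fps \<Rightarrow> 'a fps" where
  "Dpfun q j x = (\<Prod>n\<le>j. (if digit q n j = q - 1 then hasse n x ^ (q - 1) - 1
                            else hasse n x ^ digit q n j))"

end

(*
  Over a field with q elements the binomial coefficients (q choose k), 0 < k < q, vanish, so
  (q - 1 choose i) = (-1)^i and
    (a + b)^(q-1) = sum_{i<q} (-1)^i a^i b^(q-1-i),   (a - b)^(q-1) = sum_{i<q} a^i b^(q-1-i).
  All base-q digits of q^m - 1 equal q - 1, so D_{q^m-1}(x +- u) is the product over n < m of
  (D_n x +- D_n u)^(q-1), and D'_{q^m-1}(x +- u) the product of (D_n x +- D_n u)^(q-1) - 1.
  Expanding the product, choosing the i_n-th summand in the n-th factor gives the term indexed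
  by e = sum_n i_n q^n, whose complement q^m - 1 - e has the digits q - 1 - i_n; the signs
  (-1)^(i_n) multiply to (-1)^e because (-1)^q = -1.
*)
theory Submission
  imports Defs "HOL-Algebra.Algebraic_Closure_Type"
begin

lemma card_field_ge_2: "2 \<le> CARD('a::{finite,field})"
proof -
  have "card {0::'a, 1} \<le> CARD('a)" by (intro card_mono) auto
  then show ?thesis by simp
qed

lemma power_card_eq_self: "(x::'a::{finite,field}) ^ CARD('a) = x"
proof (cases "x = 0")
  case True
  then show ?thesis using card_field_ge_2[where 'a='a] by simp
next
  case False
  let ?R = "ring_of_type_algebra :: 'a ring"
  interpret field ?R by (rule field_from_type_algebra)
  have "x [^]\<^bsub>Multiplicative_Group.mult_of ?R\<^esub> Coset.order (Multiplicative_Group.mult_of ?R) = 1"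
    using group.pow_order_eq_1[OF field_mult_group, of x] False
    by (simp add: ring_of_type_algebra_def)
  moreover have "y [^]\<^bsub>?R\<^esub> n = y ^ n" for y :: 'a and n :: nat
    by (induction n) (simp_all add: ring_of_type_algebra_def)
  moreover have "Coset.order (Multiplicative_Group.mult_of ?R) = CARD('a) - 1"
    by (simp add: order_mult_of Coset.order_def ring_of_type_algebra_def)
  ultimately have "x ^ (CARD('a) - 1) = 1"
    by (simp add: Multiplicative_Group.nat_pow_mult_of)
  then show ?thesis
    using card_field_ge_2[where 'a='a] by (simp add: power_eq_if)
qed

text \<open>The polynomial \<open>(X + 1)^q - X^q - 1\<close> has degree less than \<open>q\<close> and vanishes on all
  \<open>q\<close> elements of the field, so all its coefficients are zero.\<close>
lemma of_nat_card_choose_eq_0: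
  assumes "0 < k" "k < CARD('a::{finite,field})"
  shows "(of_nat (CARD('a) choose k) :: 'a) = 0"
proof -
  define q where "q = CARD('a)"
  have q: "2 \<le> q" unfolding q_def by (rule card_field_ge_2)
  define P :: "'a poly" where "P = (\<Sum>k\<in>{1..<q}. monom (of_nat (q choose k)) k)"
  have "poly P t = 0" for t
  proof -
    have "{..q} = insert 0 (insert q {1..<q})" using q by auto
    then have "(t + 1) ^ q = 1 + (t ^ q + poly P t)"
      using q binomial_ring[of t 1 q] by (simp add: P_def poly_sum poly_monom)
    moreover have "(t + 1) ^ q = t + 1" "t ^ q = t"
      unfolding q_def by (rule power_card_eq_self)+
    ultimately show ?thesis by simp
  qed
  moreover have "degree P < q"
    using q by (intro le_less_trans[OF degree_le[of "q - 1"]]) (auto simp: P_def coeff_sum)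
  ultimately have "P = 0"
    by (intro poly_eqI_degree[where A = UNIV]) (auto simp: q_def)
  then have "coeff P k = 0" by simp
  then show ?thesis
    using assms by (simp add: P_def coeff_sum q_def)
qed

lemma of_nat_pred_choose_eq_minus_one_power:
  assumes "\<And>k. 0 < k \<Longrightarrow> k < q \<Longrightarrow> of_nat (q choose k) = (0::'r::comm_ring_1)"
    and "i < q"
  shows "(of_nat ((q - 1) choose i) :: 'r) = (-1) ^ i"
  using assms(2)
proof (induction i)
  case (Suc i)
  have "of_nat ((q - 1) choose i) + of_nat ((q - 1) choose Suc i) = (of_nat (q choose Suc i) :: 'r)"
    using Suc.prems by (metis Suc_diff_1 binomial_Suc_Suc gr_implies_not0 not_gr0 of_nat_add)
  also have "\<dots> = 0" using assms(1) Suc.prems by simp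
  finally show ?case
    using Suc by (simp flip: minus_unique)
qed simp

lemma power_pred_add_eq_sum:
  fixes a b :: "'r::comm_ring_1"
  assumes "\<And>k. 0 < k \<Longrightarrow> k < q \<Longrightarrow> of_nat (q choose k) = (0::'r)" and "0 < q"
  shows "(a + b) ^ (q - 1) = (\<Sum>i<q. (-1) ^ i * a ^ i * b ^ (q - 1 - i))"
proof -
  have "{..q - 1} = {..<q}" using \<open>0 < q\<close> by auto
  then show ?thesis
    using binomial_ring[of a b "q - 1"] of_nat_pred_choose_eq_minus_one_power[OF assms(1)] by simp
qed

lemma power_pred_diff_eq_sum:
  fixes a b :: "'r::comm_ring_1"
  assumes "\<And>k. 0 < k \<Longrightarrow> k < q \<Longrightarrow> of_nat (q choose k) = (0::'r)" and "0 < q"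
  shows "(a - b) ^ (q - 1) = (\<Sum>i<q. a ^ i * b ^ (q - 1 - i))"
proof -
  have "(-1::'r) ^ (q - 1) = 1"
    using of_nat_pred_choose_eq_minus_one_power[OF assms(1), of "q - 1"] \<open>0 < q\<close> by simp
  then have "(-1) ^ i * (-1) ^ (q - 1 - i) = (1::'r)" if "i < q" for i
    using that by (simp flip: power_add)
  moreover have "(-1) ^ i * a ^ i * (-b) ^ (q - 1 - i)
      = ((-1) ^ i * (-1) ^ (q - 1 - i)) * (a ^ i * b ^ (q - 1 - i))" for i
    by (simp only: power_minus[of b] mult_ac)
  ultimately have "(-1) ^ i * a ^ i * (-b) ^ (q - 1 - i) = a ^ i * b ^ (q - 1 - i)" if "i < q" for i
    using that by simp
  then show ?thesis
    using power_pred_add_eq_sum[OF assms, of a "-b"] by simp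
qed

lemma digit_eq_0: "e < q ^ n \<Longrightarrow> digit q n e = 0"
  by (simp add: digit_def)

lemma digit_add_mult_power_low:
  assumes "e < q ^ m" "n < m"
  shows "digit q n (e + q ^ m * i) = digit q n e"
proof -
  define k where "k = q ^ (m - n - 1) * i"
  have "q ^ m * i = q ^ n * (q * k)"
    using assms(2) by (simp add: k_def flip: power_Suc power_add mult.assoc)
  moreover have "0 < q" using assms by (cases q) (auto simp: power_0_left)
  ultimately have "(e + q ^ m * i) div q ^ n = e div q ^ n + q * k"
    by simp
  then show ?thesis by (simp add: digit_def)
qed

lemma digit_add_mult_power_top:
  assumes "e < q ^ m" "i < q"
  shows "digit q m (e + q ^ m * i) = i"
  using assms by (simp add: digit_def)

lemma prod_digits_add_mult_power:
  assumes "e < q ^ m" "i < q"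
  shows "(\<Prod>n<Suc m. f n (digit q n (e + q ^ m * i))) = (\<Prod>n<m. f n (digit q n e)) * f m i"
  using assms by (simp add: digit_add_mult_power_low digit_add_mult_power_top)

lemma power_Suc_minus_1_minus_add:
  fixes q e i m :: nat
  assumes "e < q ^ m" "i < q"
  shows "q ^ Suc m - 1 - (e + q ^ m * i) = (q ^ m - 1 - e) + q ^ m * (q - 1 - i)"
proof -
  obtain j where j: "q = i + 1 + j" using less_imp_Suc_add[OF assms(2)] by auto
  then have "q ^ Suc m = q ^ m * i + q ^ m + q ^ m * j" by (simp add: algebra_simps)
  then show ?thesis using assms(1) j by simp
qed

lemma digit_power_minus_1:
  assumes "n < m" "0 < q"
  shows "digit q n (q ^ m - 1) = q - 1"
  using assms(1)
proof (induction m)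
  case (Suc m)
  have split: "q ^ Suc m - 1 = (q ^ m - 1) + q ^ m * (q - 1)"
    using power_Suc_minus_1_minus_add[of 0 q m 0] assms(2) by simp
  have low: "q ^ m - 1 < q ^ m" using assms(2) by simp
  show ?case
  proof (cases "n < m")
    case True
    then show ?thesis
      unfolding split digit_add_mult_power_low[OF low True] by (rule Suc.IH)
  next
    case False
    with Suc.prems have "n = m" by simp
    show ?thesis
      unfolding split \<open>n = m\<close> by (rule digit_add_mult_power_top[OF low]) (use assms(2) in simp)
  qed
qed simp

lemma sum_lessThan_power_Suc:
  fixes g :: "nat \<Rightarrow> 'a::comm_monoid_add"
  shows "(\<Sum>e<q ^ Suc m. g e) = (\<Sum>i<q. \<Sum>e<q ^ m. g (e + q ^ m * i))"
proof -
  have "(\<Sum>e<q ^ Suc m. g e) = (\<Sum>i<q. sum g {i * q ^ m..<i * q ^ m + q ^ m})"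
    using sum.nat_group[of g "q ^ m" q] by simp
  also have "\<dots> = (\<Sum>i<q. \<Sum>e<q ^ m. g (e + q ^ m * i))"
    by (simp add: sum.atLeastLessThan_shift_0 atLeast0LessThan algebra_simps)
  finally show ?thesis .
qed

lemma prod_sum_eq_sum_digits:
  fixes A B :: "nat \<Rightarrow> nat \<Rightarrow> 'a::comm_semiring_1"
  assumes "0 < q"
  shows "(\<Prod>n<m. \<Sum>i<q. A n i * B n (q - 1 - i))
    = (\<Sum>e<q ^ m. (\<Prod>n<m. A n (digit q n e)) * (\<Prod>n<m. B n (digit q n (q ^ m - 1 - e))))"
proof (induction m)
  case (Suc m)
  let ?P = "\<lambda>e. \<Prod>n<m. A n (digit q n e)" and ?Q = "\<lambda>e. \<Prod>n<m. B n (digit q n (q ^ m - 1 - e))"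
  have "(\<Prod>n<Suc m. \<Sum>i<q. A n i * B n (q - 1 - i))
      = (\<Sum>e<q ^ m. ?P e * ?Q e) * (\<Sum>i<q. A m i * B m (q - 1 - i))"
    by (simp only: prod.lessThan_Suc Suc.IH)
  also have "\<dots> = (\<Sum>i<q. \<Sum>e<q ^ m. (?P e * A m i) * (?Q e * B m (q - 1 - i)))"
    by (subst sum_product, subst sum.swap) (simp only: mult_ac)
  also have "\<dots> = (\<Sum>i<q. \<Sum>e<q ^ m. (\<Prod>n<Suc m. A n (digit q n (e + q ^ m * i)))
      * (\<Prod>n<Suc m. B n (digit q n (q ^ Suc m - 1 - (e + q ^ m * i)))))"
  proof (intro sum.cong refl)
    fix i e assume "i \<in> {..<q}" "e \<in> {..<q ^ m}"
    then have i: "i < q" "q - 1 - i < q" and e: "e < q ^ m" "q ^ m - 1 - e < q ^ m" by auto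
    show "(?P e * A m i) * (?Q e * B m (q - 1 - i))
      = (\<Prod>n<Suc m. A n (digit q n (e + q ^ m * i)))
      * (\<Prod>n<Suc m. B n (digit q n (q ^ Suc m - 1 - (e + q ^ m * i))))"
      unfolding power_Suc_minus_1_minus_add[OF e(1) i(1)]
        prod_digits_add_mult_power[OF e(1) i(1)] prod_digits_add_mult_power[OF e(2) i(2)] ..
  qed
  also have "\<dots> = (\<Sum>e<q ^ Suc m. (\<Prod>n<Suc m. A n (digit q n e))
      * (\<Prod>n<Suc m. B n (digit q n (q ^ Suc m - 1 - e))))"
    by (rule sum_lessThan_power_Suc[symmetric])
  finally show ?case .
qed simp

lemma power_eq_prod_digits:
  fixes x :: "'a::comm_monoid_mult"
  assumes "x ^ q = x" "e < q ^ m"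
  shows "x ^ e = (\<Prod>n<m. x ^ digit q n e)"
  using assms(2)
proof (induction m arbitrary: e)
  case (Suc m)
  have "0 < q" using Suc.prems by (cases q) (auto simp: power_0_left)
  define i where "i = e div q ^ m"
  have low: "e mod q ^ m < q ^ m" using \<open>0 < q\<close> by simp
  have i: "i < q" using Suc.prems by (simp add: i_def less_mult_imp_div_less mult.commute)
  have e: "e = e mod q ^ m + q ^ m * i" by (simp add: i_def)
  have "x ^ (q ^ k) = x" for k
    by (induction k) (simp_all add: power_mult assms(1))
  then have "x ^ e = x ^ (e mod q ^ m) * x ^ i"
    by (subst e) (simp add: power_add power_mult)
  also have "\<dots> = (\<Prod>n<Suc m. x ^ digit q n e)"
    by (subst (2) e, subst prod_digits_add_mult_power[OF low i]) (simp add: Suc.IH[OF low])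
  finally show ?case .
qed simp

lemma less_power_self: "2 \<le> q \<Longrightarrow> n < (q::nat) ^ n"
  using less_exp[of n] power_mono[of 2 q n] by linarith

definition digit_prod :: "nat \<Rightarrow> (nat \<Rightarrow> nat \<Rightarrow> 'a::comm_monoid_mult) \<Rightarrow> nat \<Rightarrow> 'a" where
  "digit_prod q f j = (\<Prod>n\<le>j. f n (digit q n j))"

lemma digit_prod_eq_prod_lessThan:
  assumes q: "2 \<le> q" and e: "e < q ^ m" and f: "\<And>n. f n 0 = 1"
  shows "digit_prod q f e = (\<Prod>n<m. f n (digit q n e))"
proof -
  have vanish: "f n (digit q n e) = 1" if "e < n \<or> m \<le> n" for n
  proof -
    have "e < q ^ n"
    proof (cases "e < n")
      case False
      with that have "q ^ m \<le> q ^ n" using q by (simp add: power_increasing)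
      with e show ?thesis by linarith
    qed (use less_power_self[OF q, of n] in linarith)
    then show ?thesis by (simp add: digit_eq_0 f)
  qed
  have "digit_prod q f e = (\<Prod>n\<in>{..e} \<union> {..<m}. f n (digit q n e))"
    unfolding digit_prod_def by (rule prod.mono_neutral_left) (auto intro: vanish)
  also have "\<dots> = (\<Prod>n<m. f n (digit q n e))"
    by (rule prod.mono_neutral_right) (auto intro: vanish)
  finally show ?thesis .
qed

lemma digit_prod_power_minus_1:
  assumes q: "2 \<le> q" and f: "\<And>n. f n 0 = 1"
  shows "digit_prod q f (q ^ m - 1) = (\<Prod>n<m. f n (q - 1))"
proof -
  have "q ^ m - 1 < q ^ m" using q by simp
  from q this f have "digit_prod q f (q ^ m - 1) = (\<Prod>n<m. f n (digit q n (q ^ m - 1)))"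
    by (rule digit_prod_eq_prod_lessThan)
  also have "\<dots> = (\<Prod>n<m. f n (q - 1))"
    using q by (intro prod.cong refl) (subst digit_power_minus_1, auto)
  finally show ?thesis .
qed

lemma digit_prod_mult_power:
  assumes q: "2 \<le> q" and s: "s ^ q = s"
  shows "digit_prod q (\<lambda>n k. s ^ k * f n k) e = s ^ e * digit_prod q f e"
proof -
  have e: "e < q ^ e" using less_power_self[OF q] .
  have "(\<Prod>n\<le>e. s ^ digit q n e) = (\<Prod>n<e. s ^ digit q n e)"
    using digit_prod_eq_prod_lessThan[OF q e, of "\<lambda>_ k. s ^ k"] by (simp add: digit_prod_def)
  also have "\<dots> = s ^ e" using power_eq_prod_digits[OF s e] ..
  finally show ?thesis by (simp add: digit_prod_def prod.distrib)
qed

lemma digit_prod_convolution: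
  fixes f g h :: "nat \<Rightarrow> nat \<Rightarrow> 'a::comm_semiring_1"
  assumes q: "2 \<le> q" and f0: "\<And>n. f n 0 = 1" and g0: "\<And>n. g n 0 = 1" and h0: "\<And>n. h n 0 = 1"
    and h: "\<And>n. h n (q - 1) = (\<Sum>i<q. f n i * g n (q - 1 - i))"
  shows "digit_prod q h (q ^ m - 1)
    = (\<Sum>e\<le>q ^ m - 1. digit_prod q f e * digit_prod q g (q ^ m - 1 - e))"
proof -
  have "digit_prod q h (q ^ m - 1) = (\<Prod>n<m. \<Sum>i<q. f n i * g n (q - 1 - i))"
    unfolding digit_prod_power_minus_1[of q h, OF q h0] h ..
  also have "\<dots> = (\<Sum>e<q ^ m. (\<Prod>n<m. f n (digit q n e)) * (\<Prod>n<m. g n (digit q n (q ^ m - 1 - e))))"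
    using q by (intro prod_sum_eq_sum_digits) simp
  also have "\<dots> = (\<Sum>e<q ^ m. digit_prod q f e * digit_prod q g (q ^ m - 1 - e))"
  proof (intro sum.cong refl)
    fix e assume "e \<in> {..<q ^ m}"
    then have "e < q ^ m" "q ^ m - 1 - e < q ^ m" by auto
    then show "(\<Prod>n<m. f n (digit q n e)) * (\<Prod>n<m. g n (digit q n (q ^ m - 1 - e)))
      = digit_prod q f e * digit_prod q g (q ^ m - 1 - e)"
      using digit_prod_eq_prod_lessThan[where f = f, OF q _ f0]
        digit_prod_eq_prod_lessThan[where f = g, OF q _ g0] by simp
  qed
  also have "{..<q ^ m} = {..q ^ m - 1}"
    using q by (cases "q ^ m") auto
  finally show ?thesis .
qed

text \<open>\<open>D'\<^bsub>k q^n\<^esub>(x) = primed_power q k (D\<^sub>n x)\<close> for a digit \<open>k < q\<close>.\<close>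
definition primed_power :: "nat \<Rightarrow> nat \<Rightarrow> 'a::comm_ring_1 \<Rightarrow> 'a" where
  "primed_power q k b = (if k = q - 1 then b ^ (q - 1) - 1 else b ^ k)"

lemma primed_power_pred_eq_sum:
  assumes "0 < q" and s: "s ^ (q - 1) = (\<Sum>i<q. c i * b ^ (q - 1 - i))" and "c 0 = 1"
  shows "primed_power q (q - 1) s = (\<Sum>i<q. c i * primed_power q (q - 1 - i) b)"
proof -
  have "(\<Sum>i<q. c i * primed_power q (q - 1 - i) b)
      = (\<Sum>i<q. c i * b ^ (q - 1 - i) - (if i = 0 then 1 else 0))"
    using \<open>c 0 = 1\<close> by (intro sum.cong refl) (auto simp: primed_power_def algebra_simps)
  also have "\<dots> = s ^ (q - 1) - 1"
    unfolding sum_subtractf s[symmetric] using \<open>0 < q\<close> by simp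
  finally show ?thesis by (simp add: primed_power_def)
qed

lemma Dfun_eq_digit_prod: "Dfun q j x = digit_prod q (\<lambda>n k. hasse n x ^ k) j"
  by (simp add: Dfun_def digit_prod_def)

lemma Dpfun_eq_digit_prod: "Dpfun q j x = digit_prod q (\<lambda>n k. primed_power q k (hasse n x)) j"
  by (simp add: Dpfun_def digit_prod_def primed_power_def)

lemma Dfun_power_minus_1_eq_sum:
  fixes x u y s :: "'a::comm_ring_1 fps"
  assumes q: "2 \<le> q" and s: "s ^ q = s"
    and y: "\<And>n. hasse n y ^ (q - 1) = (\<Sum>i<q. s ^ i * hasse n x ^ i * hasse n u ^ (q - 1 - i))"
  shows "Dfun q (q ^ m - 1) y = (\<Sum>e\<le>q ^ m - 1. s ^ e * Dfun q e x * Dfun q (q ^ m - 1 - e) u)"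
  using digit_prod_convolution[where f = "\<lambda>n k. s ^ k * hasse n x ^ k"
      and g = "\<lambda>n k. hasse n u ^ k" and h = "\<lambda>n k. hasse n y ^ k", OF q _ _ _ y]
  by (simp add: Dfun_eq_digit_prod digit_prod_mult_power[OF q s] mult.assoc)

lemma Dpfun_power_minus_1_eq_sum:
  fixes x u y s :: "'a::comm_ring_1 fps"
  assumes q: "2 \<le> q" and s: "s ^ q = s"
    and y: "\<And>n. hasse n y ^ (q - 1) = (\<Sum>i<q. s ^ i * hasse n x ^ i * hasse n u ^ (q - 1 - i))"
  shows "Dpfun q (q ^ m - 1) y = (\<Sum>e\<le>q ^ m - 1. s ^ e * Dfun q e x * Dpfun q (q ^ m - 1 - e) u)"
proof -
  have "primed_power q (q - 1) (hasse n y)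
      = (\<Sum>i<q. s ^ i * hasse n x ^ i * primed_power q (q - 1 - i) (hasse n u))" for n
    using q y by (intro primed_power_pred_eq_sum) auto
  moreover have "primed_power q 0 b = 1" for b :: "'a fps"
    using q by (simp add: primed_power_def)
  ultimately show ?thesis
    using digit_prod_convolution[where f = "\<lambda>n k. s ^ k * hasse n x ^ k"
        and g = "\<lambda>n k. primed_power q k (hasse n u)"
        and h = "\<lambda>n k. primed_power q k (hasse n y)", OF q]
    by (simp add: Dfun_eq_digit_prod Dpfun_eq_digit_prod digit_prod_mult_power[OF q s] mult.assoc)
qed

lemma hasse_add: "hasse n (x + u) = hasse n x + hasse n u"
  by (rule fps_ext) (simp add: hasse_def algebra_simps)

lemma hasse_diff: "hasse n (x - u) = hasse n x - hasse n (u :: 'a::comm_ring_1 fps)"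
  by (rule fps_ext) (simp add: hasse_def algebra_simps)

theorem corollary8:
  fixes x u :: "'a::{finite,field} fps" and m :: nat
  shows "Dfun (CARD('a)) (CARD('a) ^ m - 1) (x + u) =
           (\<Sum>e\<le>CARD('a) ^ m - 1. (- 1) ^ e * Dfun (CARD('a)) e x * Dfun (CARD('a)) (CARD('a) ^ m - 1 - e) u)
       \<and> Dfun (CARD('a)) (CARD('a) ^ m - 1) (x - u) =
           (\<Sum>e\<le>CARD('a) ^ m - 1. Dfun (CARD('a)) e x * Dfun (CARD('a)) (CARD('a) ^ m - 1 - e) u)
       \<and> Dpfun (CARD('a)) (CARD('a) ^ m - 1) (x + u) =
           (\<Sum>e\<le>CARD('a) ^ m - 1. (- 1) ^ e * Dfun (CARD('a)) e x * Dpfun (CARD('a)) (CARD('a) ^ m - 1 - e) u)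
       \<and> Dpfun (CARD('a)) (CARD('a) ^ m - 1) (x - u) =
           (\<Sum>e\<le>CARD('a) ^ m - 1. Dfun (CARD('a)) e x * Dpfun (CARD('a)) (CARD('a) ^ m - 1 - e) u)"
proof -
  let ?q = "CARD('a)"
  have q: "2 \<le> ?q" by (rule card_field_ge_2)
  have choose: "of_nat (?q choose k) = (0 :: 'a fps)" if "0 < k" "k < ?q" for k
    using of_nat_card_choose_eq_0[OF that] by (simp flip: fps_of_nat)
  have minus_one: "(-1 :: 'a fps) ^ ?q = -1"
    using power_card_eq_self[of "-1 :: 'a"] by (metis fps_const_neg fps_const_power fps_const_1_eq_1)
  have add: "hasse n (x + u) ^ (?q - 1)
      = (\<Sum>i<?q. (-1) ^ i * hasse n x ^ i * hasse n u ^ (?q - 1 - i))" for n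
    unfolding hasse_add using q by (intro power_pred_add_eq_sum choose) auto
  have diff: "hasse n (x - u) ^ (?q - 1)
      = (\<Sum>i<?q. 1 ^ i * hasse n x ^ i * hasse n u ^ (?q - 1 - i))" for n
    unfolding hasse_diff using q power_pred_diff_eq_sum[OF choose] by simp
  show ?thesis
    using Dfun_power_minus_1_eq_sum[OF q minus_one add] Dfun_power_minus_1_eq_sum[OF q _ diff]
      Dpfun_power_minus_1_eq_sum[OF q minus_one add] Dpfun_power_minus_1_eq_sum[OF q _ diff]
    by simp
qed

end
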